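(* Let $G$ be a finite group and suppose $G$ has a subgroup $H$ admitting a nontrivial homomorphism $\phi: H \to \{\pm 1\}$. Then there is a function $f: G \to \{\pm 1\}$ with $\mathbb{E}_{x\in G} f(x) = 0$ and \[ \Pr_{x,y}\,[f(x)f(y) = f(xy)] \ge \frac{1}{2}\left(1 + \frac{1}{2}\frac{|H|}{|G|}\left(1 - \frac{|N(H)|}{|G|}\right) + \frac{|H|^2}{|G|^2}\right), \] where $x,y$ are chosen uniformly and independently from $G$ and $N(H) = \{c \in G : cHc^{-1} = H\}$ is the normalizer of $H$ in $G$.
   Context: $\mathbb{E}$ denotes the average over the uniform distribution on $G$. *)

theory Defs
  imports Complex_Main "HOL-Algebra.Group_Action"
begin

end

theory Submission
  imports Defs
begin

text \<open>Call \<open>f : G \<rightarrow> {\<plusminus>1}\<close> an extension of \<open>\<phi>\<close> if \<open>f(hz) = \<phi>(h) f(z)\<close> for \<open>h \<in> H\<close>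
  and \<open>f = \<phi>\<close> on \<open>H\<close>. Every extension sums to zero once \<open>\<phi>\<close> is nontrivial, so it suffices to
  bound the number of pairs \<open>(x, y)\<close> with \<open>f(x) f(y) = f(xy)\<close> on average over all extensions.
  If \<open>x \<in> H\<close>, every extension agrees at \<open>(x, y)\<close>. If \<open>x \<notin> H\<close> and \<open>y \<in> H \<inter> x\<inverse>Hx\<close>,
  agreement means \<open>\<phi>(y) = \<phi>(xyx\<inverse>)\<close>, the kernel of a character of that subgroup, so it holds
  for at least half of these \<open>y\<close>. For the remaining \<open>y \<notin> x\<inverse>H \<inter> Hx\<close> some right coset contains
  an odd number of \<open>x, y, xy\<close>, and negating an extension on it toggles agreement, so exactly half
  of the extensions agree. Finally \<open>|x\<inverse>H \<inter> Hx| \<le> |H \<inter> x\<inverse>Hx|\<close>, which is at most \<open>|H|\<close>,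
  and at most \<open>|H|/2\<close> for \<open>x \<notin> N(H)\<close> since \<open>H \<inter> x\<inverse>Hx\<close> is then a proper subgroup of \<open>H\<close>.\<close>

lemma (in group) inv_mult_cancel_left:
  "a \<in> carrier G \<Longrightarrow> b \<in> carrier G \<Longrightarrow> inv a \<otimes> (a \<otimes> b) = b"
  by (simp add: m_assoc [symmetric])

lemma (in group) mult_inv_cancel_left:
  "a \<in> carrier G \<Longrightarrow> b \<in> carrier G \<Longrightarrow> a \<otimes> (inv a \<otimes> b) = b"
  by (simp add: m_assoc [symmetric])

lemma (in group) subgroup_mult_left_mem_iff:
  assumes H: "subgroup H G" and h: "h \<in> H" and a: "a \<in> carrier G"
  shows "h \<otimes> a \<in> H \<longleftrightarrow> a \<in> H"
proof
  assume "h \<otimes> a \<in> H"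
  then have "inv h \<otimes> (h \<otimes> a) \<in> H"
    using H h by (simp add: subgroup.m_closed subgroup.m_inv_closed)
  then show "a \<in> H"
    using H h a by (simp add: m_assoc [symmetric] subgroup.mem_carrier)
next
  assume "a \<in> H"
  then show "h \<otimes> a \<in> H"
    using H h by (simp add: subgroup.m_closed)
qed

lemma (in group) subgroup_inv_mem_iff:
  assumes "subgroup H G" and a: "a \<in> carrier G"
  shows "inv a \<in> H \<longleftrightarrow> a \<in> H"
proof -
  interpret H: subgroup H G by fact
  show ?thesis
    using a H.m_inv_closed [of "inv a"] by auto
qed

lemma (in group) conjugate_mult:
  assumes "x \<in> carrier G" "a \<in> carrier G" "b \<in> carrier G"
  shows "x \<otimes> (a \<otimes> b) \<otimes> inv x = (x \<otimes> a \<otimes> inv x) \<otimes> (x \<otimes> b \<otimes> inv x)"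
  using assms by (simp add: m_assoc inv_mult_cancel_left)

lemma (in group) conjugate_inv:
  assumes "x \<in> carrier G" "a \<in> carrier G"
  shows "x \<otimes> inv a \<otimes> inv x = inv (x \<otimes> a \<otimes> inv x)"
  using assms by (simp add: inv_mult_group m_assoc)

lemma (in group) subgroup_inter_conjugate:
  assumes H: "subgroup H G" and x: "x \<in> carrier G"
  shows "subgroup {k \<in> H. x \<otimes> k \<otimes> inv x \<in> H} G"
proof (rule subgroupI)
  show "{k \<in> H. x \<otimes> k \<otimes> inv x \<in> H} \<subseteq> carrier G"
    using subgroup.subset [OF H] by blast
  show "{k \<in> H. x \<otimes> k \<otimes> inv x \<in> H} \<noteq> {}"
    using subgroup.one_closed [OF H] x by auto
next
  fix a assume a: "a \<in> {k \<in> H. x \<otimes> k \<otimes> inv x \<in> H}"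
  then have "x \<otimes> inv a \<otimes> inv x \<in> H"
    using H x conjugate_inv [OF x, of a] by (simp add: subgroup.m_inv_closed subgroup.mem_carrier)
  with a H show "inv a \<in> {k \<in> H. x \<otimes> k \<otimes> inv x \<in> H}"
    by (simp add: subgroup.m_inv_closed)
next
  fix a b assume a: "a \<in> {k \<in> H. x \<otimes> k \<otimes> inv x \<in> H}" and b: "b \<in> {k \<in> H. x \<otimes> k \<otimes> inv x \<in> H}"
  then have "x \<otimes> (a \<otimes> b) \<otimes> inv x \<in> H"
    using H x conjugate_mult [OF x, of a b] by (simp add: subgroup.m_closed subgroup.mem_carrier)
  with a b H show "a \<otimes> b \<in> {k \<in> H. x \<otimes> k \<otimes> inv x \<in> H}"
    by (simp add: subgroup.m_closed)
qed

lemma (in group) card_proper_subgroup_double_le: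
  assumes "subgroup K G" and "subgroup H G" and KH: "K \<subset> H" and fin: "finite H"
  shows "2 * card K \<le> card H"
proof -
  interpret K: subgroup K G by fact
  interpret H: subgroup H G by fact
  obtain h where h: "h \<in> H" "h \<notin> K"
    using KH by blast
  have "h \<otimes> k \<in> H - K" if k: "k \<in> K" for k
  proof
    have "k \<in> H"
      using k KH by blast
    then show "h \<otimes> k \<in> H"
      using h by simp
    show "h \<otimes> k \<notin> K"
    proof
      assume "h \<otimes> k \<in> K"
      then have "h \<otimes> k \<otimes> inv k \<in> K"
        using k by simp
      moreover have "h \<otimes> k \<otimes> inv k = h"
        using h k by (simp add: m_assoc)
      ultimately show False
        using h by simp
    qed
  qed
  moreover have "inj_on (\<lambda>k. h \<otimes> k) K"
    using h by (intro inj_onI) simp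
  ultimately have "card K \<le> card (H - K)"
    using fin by (intro card_inj_on_le) auto
  moreover have "card (H - K) + card K = card H"
    using KH fin by (metis card_Diff_subset card_mono finite_subset le_add_diff_inverse2 psubset_imp_subset)
  ultimately show ?thesis
    by linarith
qed

lemma (in group) card_le_double_card_sign_kernel:
  fixes \<psi> :: "'a \<Rightarrow> int"
  assumes "subgroup K G" and fin: "finite K"
    and sign: "\<forall>k\<in>K. \<psi> k \<in> {1, -1}"
    and mult: "\<forall>a\<in>K. \<forall>b\<in>K. \<psi> (a \<otimes> b) = \<psi> a * \<psi> b"
  shows "card K \<le> 2 * card {k \<in> K. \<psi> k = 1}"
proof -
  interpret K: subgroup K G by fact
  let ?ker = "{k \<in> K. \<psi> k = 1}" and ?neg = "{k \<in> K. \<psi> k \<noteq> 1}"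
  have "card ?neg \<le> card ?ker"
  proof (cases "?neg = {}")
    case False
    then obtain k1 where k1: "k1 \<in> K" "\<psi> k1 = -1"
      using sign by fastforce
    have "inj_on (\<lambda>k. k1 \<otimes> k) ?neg"
      using k1 by (intro inj_onI) simp
    moreover have "k1 \<otimes> k \<in> ?ker" if "k \<in> ?neg" for k
      using that k1 sign mult by auto
    ultimately show ?thesis
      using fin by (intro card_inj_on_le) auto
  qed (metis card.empty le0)
  moreover have "card K = card ?ker + card ?neg"
    using fin by (subst card_Un_disjoint [symmetric]) (auto intro: arg_cong [where f = card])
  ultimately show ?thesis
    by simp
qed

lemma (in group) normalizerI_finite:
  assumes H: "subgroup H G" and fin: "finite H" and x: "x \<in> carrier G"
    and conj: "\<forall>h\<in>H. x \<otimes> h \<otimes> inv x \<in> H"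
  shows "x \<in> normalizer G H"
proof -
  have "inj_on (\<lambda>h. x \<otimes> h \<otimes> inv x) H"
    using x H by (intro inj_onI) (simp add: subgroup.mem_carrier)
  then have "(\<lambda>h. x \<otimes> h \<otimes> inv x) ` H = H"
    using conj fin by (intro card_subset_eq) (auto simp: card_image)
  moreover have "x <# H #> inv x = (\<lambda>h. x \<otimes> h \<otimes> inv x) ` H"
    unfolding l_coset_def r_coset_def by auto
  ultimately show ?thesis
    using x subgroup.subset [OF H] unfolding normalizer_def stabilizer_def by simp
qed

text \<open>\<open>conjugate_inter H x = H \<inter> x\<inverse>Hx\<close> and \<open>coset_inter H x = x\<inverse>H \<inter> Hx\<close>.\<close>
definition (in group) conjugate_inter :: "'a set \<Rightarrow> 'a \<Rightarrow> 'a set" where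
  "conjugate_inter H x = {k \<in> H. x \<otimes> k \<otimes> inv x \<in> H}"

definition (in group) coset_inter :: "'a set \<Rightarrow> 'a \<Rightarrow> 'a set" where
  "coset_inter H x = {y \<in> carrier G. x \<otimes> y \<in> H \<and> y \<otimes> inv x \<in> H}"

lemma (in group) card_coset_inter_le_card_conjugate_inter:
  assumes H: "subgroup H G" and fin: "finite H" and x: "x \<in> carrier G"
  shows "card (coset_inter H x) \<le> card (conjugate_inter H x)"
proof (cases "coset_inter H x = {}")
  case False
  then obtain y0 where y0: "y0 \<in> carrier G" "x \<otimes> y0 \<in> H" "y0 \<otimes> inv x \<in> H"
    unfolding coset_inter_def by blast
  have "inj_on (\<lambda>y. y \<otimes> inv y0) (coset_inter H x)"
    using y0 by (intro inj_onI) (auto simp: coset_inter_def)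
  moreover have "y \<otimes> inv y0 \<in> conjugate_inter H x" if "y \<in> coset_inter H x" for y
  proof -
    have y: "y \<in> carrier G" "x \<otimes> y \<in> H" "y \<otimes> inv x \<in> H"
      using that unfolding coset_inter_def by auto
    have "y \<otimes> inv y0 = (y \<otimes> inv x) \<otimes> inv (y0 \<otimes> inv x)"
      using x y y0 by (simp add: inv_mult_group m_assoc inv_mult_cancel_left)
    then have "y \<otimes> inv y0 \<in> H"
      using H y y0 by (simp add: subgroup.m_closed subgroup.m_inv_closed)
    moreover have "x \<otimes> (y \<otimes> inv y0) \<otimes> inv x = (x \<otimes> y) \<otimes> inv (x \<otimes> y0)"
      using x y y0 by (simp add: inv_mult_group m_assoc)
    then have "x \<otimes> (y \<otimes> inv y0) \<otimes> inv x \<in> H"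
      using H y y0 by (simp add: subgroup.m_closed subgroup.m_inv_closed)
    ultimately show ?thesis
      unfolding conjugate_inter_def by blast
  qed
  ultimately show ?thesis
    using fin unfolding conjugate_inter_def by (intro card_inj_on_le) auto
qed simp

lemma (in group) card_coset_inter_le:
  assumes "subgroup H G" "finite H" "x \<in> carrier G"
  shows "card (coset_inter H x) \<le> card H"
proof -
  have "conjugate_inter H x \<subseteq> H"
    unfolding conjugate_inter_def by blast
  then show ?thesis
    using card_coset_inter_le_card_conjugate_inter [OF assms] card_mono [OF assms(2)] by (meson le_trans)
qed

lemma (in group) card_coset_inter_double_le:
  assumes H: "subgroup H G" and fin: "finite H" and x: "x \<in> carrier G" "x \<notin> normalizer G H"
  shows "2 * card (coset_inter H x) \<le> card H"
proof -
  have "conjugate_inter H x \<noteq> H"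
  proof
    assume "conjugate_inter H x = H"
    then have "\<forall>h\<in>H. x \<otimes> h \<otimes> inv x \<in> H"
      unfolding conjugate_inter_def by blast
    with normalizerI_finite [OF H fin x(1)] x(2) show False
      by simp
  qed
  then have "conjugate_inter H x \<subset> H"
    unfolding conjugate_inter_def by blast
  then have "2 * card (conjugate_inter H x) \<le> card H"
    using subgroup_inter_conjugate [OF H x(1)] H fin
    by (intro card_proper_subgroup_double_le) (auto simp: conjugate_inter_def)
  with card_coset_inter_le_card_conjugate_inter [OF H fin x(1)] show ?thesis
    by simp
qed

lemma (in group) sum_card_coset_inter_le:
  assumes H: "subgroup H G" and fin: "finite (carrier G)"
  shows "2 * (\<Sum>x\<in>carrier G - H. card (coset_inter H x)) + 2 * card H ^ 2
    \<le> card H * (card (normalizer G H) + card (carrier G))"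
proof -
  let ?\<beta> = "\<lambda>x. card (coset_inter H x)" and ?N = "normalizer G H"
  have NG: "?N \<subseteq> carrier G"
    unfolding normalizer_def stabilizer_def by auto
  have finH: "finite H" and finN: "finite ?N"
    using NG fin subgroup.subset [OF H] finite_subset by blast+
  have HN: "H \<subseteq> ?N"
  proof
    fix h assume "h \<in> H"
    then show "h \<in> ?N"
      using H by (intro normalizerI_finite [OF H finH])
        (simp_all add: subgroup.m_closed subgroup.m_inv_closed subgroup.mem_carrier)
  qed
  have "carrier G - H = (?N - H) \<union> (carrier G - ?N)"
    using HN NG by blast
  moreover have "sum ?\<beta> ((?N - H) \<union> (carrier G - ?N)) = sum ?\<beta> (?N - H) + sum ?\<beta> (carrier G - ?N)"
    using finN fin by (intro sum.union_disjoint) auto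
  ultimately have split: "sum ?\<beta> (carrier G - H) = sum ?\<beta> (?N - H) + sum ?\<beta> (carrier G - ?N)"
    by simp
  have "sum ?\<beta> (?N - H) \<le> card (?N - H) * card H"
    using card_coset_inter_le [OF H finH] NG by (intro sum_bounded_above [where 'a = nat, simplified]) auto
  moreover have "2 * sum ?\<beta> (carrier G - ?N) \<le> card (carrier G - ?N) * card H"
    unfolding sum_distrib_left using card_coset_inter_double_le [OF H finH]
    by (intro sum_bounded_above [where 'a = nat, simplified]) auto
  moreover have "card H * (card ?N + card (carrier G))
      = 2 * (card (?N - H) * card H) + card (carrier G - ?N) * card H + 2 * card H ^ 2"
  proof -
    have "card ?N = card (?N - H) + card H" "card (carrier G) = card (carrier G - ?N) + card ?N"
      using card_Diff_subset [OF finH HN] card_Diff_subset [OF finN NG] card_mono [OF finN HN]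
        card_mono [OF fin NG] by auto
    then show ?thesis
      by (simp add: algebra_simps power2_eq_square)
  qed
  ultimately show ?thesis
    unfolding split by simp
qed

lemma exists_ge_average:
  fixes g :: "'a \<Rightarrow> nat"
  assumes "finite A" and "A \<noteq> {}"
  shows "\<exists>a\<in>A. sum g A \<le> card A * g a"
proof -
  have "Max (g ` A) \<in> g ` A"
    using assms by (intro Max_in) auto
  then obtain a where a: "a \<in> A" "g a = Max (g ` A)"
    by (metis imageE)
  then have "sum g A \<le> card A * g a"
    using assms(1) by (intro sum_bounded_above [where 'a = nat, simplified]) simp
  with a show ?thesis
    by blast
qed

lemma card_filter_eq_sum: "finite A \<Longrightarrow> card {a \<in> A. P a} = (\<Sum>a\<in>A. if P a then 1 else 0)"
  by (simp add: sum.If_cases Int_def)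

lemma agreement_density_ge:
  fixes n m N a :: nat
  assumes n: "0 < n" and count: "2 * n ^ 2 + m * n + 2 * m ^ 2 \<le> 4 * a + m * N"
  shows "(1 / 2) * (1 + (1 / 2) * (real m / real n) * (1 - real N / real n) + real m ^ 2 / real n ^ 2)
    \<le> real a / real n ^ 2"
proof -
  have "(1 / 2) * (1 + (1 / 2) * (real m / real n) * (1 - real N / real n) + real m ^ 2 / real n ^ 2)
      = (2 * real n ^ 2 + real m * real n + 2 * real m ^ 2 - real m * real N) / (4 * real n ^ 2)"
    using n by (simp add: field_simps power2_eq_square)
  also have "\<dots> \<le> (4 * real a) / (4 * real n ^ 2)"
  proof (rule divide_right_mono)
    have "real (2 * n ^ 2 + m * n + 2 * m ^ 2) \<le> real (4 * a + m * N)"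
      using count by (simp only: of_nat_le_iff)
    then show "2 * real n ^ 2 + real m * real n + 2 * real m ^ 2 - real m * real N \<le> 4 * real a"
      by simp
  qed simp
  also have "\<dots> = real a / real n ^ 2"
    by simp
  finally show ?thesis .
qed

locale sign_character = group G + H: subgroup H G for G (structure) and H +
  fixes \<phi> :: "'a \<Rightarrow> int"
  assumes finite_carrier: "finite (carrier G)"
    and \<phi>_sign: "\<forall>h\<in>H. \<phi> h \<in> {1, -1}"
    and \<phi>_mult: "\<forall>h1\<in>H. \<forall>h2\<in>H. \<phi> (h1 \<otimes> h2) = \<phi> h1 * \<phi> h2"
begin

lemma finite_H: "finite H"
  using finite_subset [OF H.subset finite_carrier] .

lemma \<phi>_cases: "h \<in> H \<Longrightarrow> \<phi> h = 1 \<or> \<phi> h = -1"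
  using \<phi>_sign by auto

lemma \<phi>_one: "\<phi> \<one> = 1"
proof -
  have "\<phi> \<one> = \<phi> (\<one> \<otimes> \<one>)"
    by simp
  also have "\<dots> = \<phi> \<one> * \<phi> \<one>"
    using \<phi>_mult H.one_closed by blast
  finally show ?thesis
    using \<phi>_cases [OF H.one_closed] by auto
qed

lemma rcoset_mult_left_iff:
  assumes h: "h \<in> H" and z: "z \<in> carrier G" and g: "g \<in> carrier G"
  shows "h \<otimes> z \<otimes> inv g \<in> H \<longleftrightarrow> z \<otimes> inv g \<in> H"
  using subgroup_mult_left_mem_iff [OF H.subgroup_axioms h, of "z \<otimes> inv g"] h z g
  by (simp add: m_assoc)

text \<open>An extension is a free choice of sign on each right coset \<open>Hz \<noteq> H\<close>; the normalization
  \<open>f \<one> = 1\<close> forces \<open>f = \<phi>\<close> on \<open>H\<close>.\<close>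
definition extensions :: "('a \<Rightarrow> int) set" where
  "extensions = {f \<in> carrier G \<rightarrow>\<^sub>E {1, -1}. f \<one> = 1 \<and> (\<forall>h\<in>H. \<forall>z\<in>carrier G. f (h \<otimes> z) = \<phi> h * f z)}"

definition agreeing :: "'a \<Rightarrow> 'a \<Rightarrow> ('a \<Rightarrow> int) set" where
  "agreeing x y = {f \<in> extensions. f x * f y = f (x \<otimes> y)}"

definition agreements :: "('a \<Rightarrow> int) \<Rightarrow> ('a \<times> 'a) set" where
  "agreements f = {(x, y). x \<in> carrier G \<and> y \<in> carrier G \<and> f x * f y = f (x \<otimes> y)}"

definition flip_coset :: "'a \<Rightarrow> ('a \<Rightarrow> int) \<Rightarrow> 'a \<Rightarrow> int" where
  "flip_coset g f = (\<lambda>z. if z \<in> carrier G \<and> z \<otimes> inv g \<in> H then - f z else f z)"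

lemma finite_extensions: "finite extensions"
proof -
  have "finite (carrier G \<rightarrow>\<^sub>E ({1, -1} :: int set))"
    using finite_carrier by (intro finite_PiE) auto
  then show ?thesis
    unfolding extensions_def by (rule finite_subset [rotated]) auto
qed

lemma extension_sign: "f \<in> extensions \<Longrightarrow> z \<in> carrier G \<Longrightarrow> f z = 1 \<or> f z = -1"
  unfolding extensions_def by (auto simp: PiE_iff)

lemma extension_mult_left:
  "f \<in> extensions \<Longrightarrow> h \<in> H \<Longrightarrow> z \<in> carrier G \<Longrightarrow> f (h \<otimes> z) = \<phi> h * f z"
  unfolding extensions_def by blast

lemma extension_on_H: "f \<in> extensions \<Longrightarrow> h \<in> H \<Longrightarrow> f h = \<phi> h"
  using extension_mult_left [of f h \<one>] by (simp add: extensions_def)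

lemma extensions_nonempty: "extensions \<noteq> {}"
proof -
  define rep where "rep z = (if z \<in> H then \<one> else SOME g. g \<in> carrier G \<and> z \<otimes> inv g \<in> H)" for z
  have rep: "rep z \<in> carrier G \<and> z \<otimes> inv (rep z) \<in> H" if z: "z \<in> carrier G" for z
  proof (cases "z \<in> H")
    case False
    have "z \<in> carrier G \<and> z \<otimes> inv z \<in> H"
      using z by simp
    then have "(SOME g. g \<in> carrier G \<and> z \<otimes> inv g \<in> H) \<in> carrier G \<and>
        z \<otimes> inv (SOME g. g \<in> carrier G \<and> z \<otimes> inv g \<in> H) \<in> H"
      by (rule someI)
    with False show ?thesis
      by (simp add: rep_def)
  qed (simp add: rep_def)
  have rep_mult_left: "rep (h \<otimes> z) = rep z" if h: "h \<in> H" and z: "z \<in> carrier G" for h z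
  proof -
    have "h \<otimes> z \<in> H \<longleftrightarrow> z \<in> H"
      by (rule subgroup_mult_left_mem_iff [OF H.subgroup_axioms h z])
    moreover have "(\<lambda>g. g \<in> carrier G \<and> h \<otimes> z \<otimes> inv g \<in> H) = (\<lambda>g. g \<in> carrier G \<and> z \<otimes> inv g \<in> H)"
      using rcoset_mult_left_iff [OF h z] by auto
    ultimately show ?thesis
      by (simp add: rep_def)
  qed
  define f where "f = (\<lambda>z\<in>carrier G. \<phi> (z \<otimes> inv (rep z)))"
  have "f \<in> carrier G \<rightarrow>\<^sub>E {1, -1}"
    using rep \<phi>_sign by (auto simp: f_def)
  moreover have "f \<one> = 1"
    using \<phi>_one by (simp add: f_def rep_def)
  moreover have "f (h \<otimes> z) = \<phi> h * f z" if h: "h \<in> H" and z: "z \<in> carrier G" for h z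
  proof -
    have "f (h \<otimes> z) = \<phi> (h \<otimes> (z \<otimes> inv (rep z)))"
      using h z rep [OF z] rep_mult_left [OF h z] by (simp add: f_def m_assoc)
    also have "\<dots> = \<phi> h * f z"
      using h z rep [OF z] \<phi>_mult by (simp add: f_def)
    finally show ?thesis .
  qed
  ultimately have "f \<in> extensions"
    unfolding extensions_def by blast
  then show ?thesis
    by blast
qed

lemma sum_extension_eq_0:
  assumes f: "f \<in> extensions" and h0: "h0 \<in> H" "\<phi> h0 \<noteq> 1"
  shows "(\<Sum>x\<in>carrier G. f x) = 0"
proof -
  have "(\<Sum>x\<in>carrier G. f (h0 \<otimes> x)) = (\<Sum>x\<in>carrier G. f x)"
    by (rule sum.reindex_bij_witness [where i = "\<lambda>x. inv h0 \<otimes> x" and j = "\<lambda>x. h0 \<otimes> x"])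
      (use h0 in \<open>simp_all add: inv_mult_cancel_left mult_inv_cancel_left\<close>)
  moreover have "(\<Sum>x\<in>carrier G. f (h0 \<otimes> x)) = (\<Sum>x\<in>carrier G. - f x)"
    using f h0 \<phi>_cases [OF h0(1)] by (intro sum.cong) (simp_all add: extension_mult_left)
  ultimately show ?thesis
    by (simp add: sum_negf)
qed

lemma flip_coset_in_extensions:
  assumes f: "f \<in> extensions" and g: "g \<in> carrier G" "g \<notin> H"
  shows "flip_coset g f \<in> extensions"
proof -
  have "flip_coset g f \<in> carrier G \<rightarrow>\<^sub>E {1, -1}"
    using f extension_sign [OF f] unfolding flip_coset_def extensions_def PiE_iff extensional_def
    by auto
  moreover have "flip_coset g f \<one> = 1"
    using f g subgroup_inv_mem_iff [OF H.subgroup_axioms g(1)]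
    by (simp add: flip_coset_def extensions_def)
  moreover have "flip_coset g f (h \<otimes> z) = \<phi> h * flip_coset g f z"
    if h: "h \<in> H" and z: "z \<in> carrier G" for h z
    using rcoset_mult_left_iff [OF h z g(1)] extension_mult_left [OF f h z] h z
    by (simp add: flip_coset_def)
  ultimately show ?thesis
    unfolding extensions_def by blast
qed

lemma flip_coset_flip_coset [simp]: "flip_coset g (flip_coset g f) = f"
  unfolding flip_coset_def by auto

text \<open>The hypothesis says that an odd number of \<open>x\<close>, \<open>y\<close>, \<open>x \<otimes> y\<close> lie in the coset \<open>Hg\<close>,
  so negating \<open>f\<close> on \<open>Hg\<close> negates \<open>f x * f y * f (x \<otimes> y)\<close>.\<close>
lemma flip_coset_toggles_agreement:
  assumes f: "f \<in> extensions" and x: "x \<in> carrier G" and y: "y \<in> carrier G"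
    and odd: "(x \<otimes> inv g \<in> H) = ((y \<otimes> inv g \<in> H) = (x \<otimes> y \<otimes> inv g \<in> H))"
  shows "flip_coset g f x * flip_coset g f y = flip_coset g f (x \<otimes> y) \<longleftrightarrow> f x * f y \<noteq> f (x \<otimes> y)"
  using extension_sign [OF f x] extension_sign [OF f y] extension_sign [OF f m_closed [OF x y]] x y odd
  unfolding flip_coset_def by auto

lemma card_agreeing_half:
  assumes x: "x \<in> carrier G" and y: "y \<in> carrier G" and g: "g \<in> carrier G" "g \<notin> H"
    and odd: "(x \<otimes> inv g \<in> H) = ((y \<otimes> inv g \<in> H) = (x \<otimes> y \<otimes> inv g \<in> H))"
  shows "2 * card (agreeing x y) = card extensions"
proof -
  have "bij_betw (flip_coset g) (agreeing x y) (extensions - agreeing x y)"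
    by (rule bij_betw_byWitness [where f' = "flip_coset g"])
      (use flip_coset_in_extensions [OF _ g] flip_coset_toggles_agreement [OF _ x y odd] in
        \<open>auto simp: agreeing_def\<close>)
  then have "card (agreeing x y) = card (extensions - agreeing x y)"
    by (rule bij_betw_same_card)
  moreover have "agreeing x y \<subseteq> extensions"
    unfolding agreeing_def by blast
  then have "card (extensions - agreeing x y) + card (agreeing x y) = card extensions"
    using finite_extensions by (metis card_Diff_subset card_mono finite_subset le_add_diff_inverse2)
  ultimately show ?thesis
    by linarith
qed

lemma agreeing_left_in_H: "x \<in> H \<Longrightarrow> y \<in> carrier G \<Longrightarrow> agreeing x y = extensions"
  unfolding agreeing_def using extension_on_H extension_mult_left by auto

lemma agreeing_conjugate_in_H:
  assumes x: "x \<in> carrier G" and y: "y \<in> H" and xy: "x \<otimes> y \<otimes> inv x \<in> H"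
  shows "agreeing x y = (if \<phi> y = \<phi> (x \<otimes> y \<otimes> inv x) then extensions else {})"
proof -
  have "f x * f y = f (x \<otimes> y) \<longleftrightarrow> \<phi> y = \<phi> (x \<otimes> y \<otimes> inv x)" if f: "f \<in> extensions" for f
  proof -
    have "f (x \<otimes> y) = \<phi> (x \<otimes> y \<otimes> inv x) * f x"
      using extension_mult_left [OF f xy x] x y by (simp add: m_assoc)
    then show ?thesis
      using extension_on_H [OF f y] extension_sign [OF f x] by auto
  qed
  then show ?thesis
    unfolding agreeing_def by auto
qed

text \<open>In each case one of the cosets \<open>Hx\<close>, \<open>Hy\<close>, \<open>H(x \<otimes> y)\<close> contains an odd number of
  \<open>x\<close>, \<open>y\<close>, \<open>x \<otimes> y\<close>.\<close>
lemma card_agreeing_generic: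
  assumes x: "x \<in> carrier G" "x \<notin> H" and y: "y \<in> carrier G"
    and not_conj: "\<not> (y \<in> H \<and> x \<otimes> y \<otimes> inv x \<in> H)"
    and not_coset: "\<not> (x \<otimes> y \<in> H \<and> y \<otimes> inv x \<in> H)"
  shows "2 * card (agreeing x y) = card extensions"
proof -
  have xy: "x \<otimes> y \<in> carrier G"
    using x y by simp
  consider "y \<otimes> inv x \<in> H \<longleftrightarrow> x \<otimes> y \<otimes> inv x \<in> H"
    | "y \<otimes> inv x \<notin> H" "x \<otimes> y \<otimes> inv x \<in> H"
    | "y \<otimes> inv x \<in> H" "x \<otimes> y \<otimes> inv x \<notin> H"
    by blast
  then show ?thesis
  proof cases
    case 1
    then show ?thesis
      using x y by (intro card_agreeing_half [OF x(1) y x]) simp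
  next
    case 2
    have "x \<otimes> inv y = inv (y \<otimes> inv x)"
      using x y by (simp add: inv_mult_group)
    then have "x \<otimes> inv y \<notin> H"
      using 2 x y subgroup_inv_mem_iff [OF H.subgroup_axioms, of "y \<otimes> inv x"] by simp
    moreover have "y \<notin> H"
      using 2 not_conj by blast
    ultimately show ?thesis
      using x y by (intro card_agreeing_half [OF x(1) y y]) (simp_all add: m_assoc)
  next
    case 3
    have "x \<otimes> inv (x \<otimes> y) = inv (x \<otimes> y \<otimes> inv x)"
      using x y by (simp add: inv_mult_group m_assoc)
    then have "x \<otimes> inv (x \<otimes> y) \<notin> H"
      using 3 x y subgroup_inv_mem_iff [OF H.subgroup_axioms, of "x \<otimes> y \<otimes> inv x"] by simp
    moreover have "y \<otimes> inv (x \<otimes> y) = inv x"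
      using x y by (simp add: inv_mult_group m_assoc [symmetric])
    moreover have "x \<otimes> y \<notin> H"
      using 3 not_coset by blast
    ultimately show ?thesis
      using x y subgroup_inv_mem_iff [OF H.subgroup_axioms x(1)]
      by (intro card_agreeing_half [OF x(1) y xy]) simp_all
  qed
qed

lemma card_conjugate_inter_le_sum_agreeing:
  assumes x: "x \<in> carrier G"
  shows "card extensions * card (conjugate_inter H x)
    \<le> 2 * (\<Sum>y\<in>conjugate_inter H x. card (agreeing x y))"
proof -
  let ?K = "conjugate_inter H x" and ?good = "\<lambda>y. \<phi> y = \<phi> (x \<otimes> y \<otimes> inv x)"
  define \<psi> where "\<psi> y = \<phi> y * \<phi> (x \<otimes> y \<otimes> inv x)" for y
  have "card ?K \<le> 2 * card {y \<in> ?K. \<psi> y = 1}"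
  proof (rule card_le_double_card_sign_kernel)
    show "subgroup ?K G"
      using subgroup_inter_conjugate [OF H.subgroup_axioms x] by (simp add: conjugate_inter_def)
    show "finite ?K"
      using finite_H by (simp add: conjugate_inter_def)
    show "\<forall>k\<in>?K. \<psi> k \<in> {1, -1}"
    proof
      fix k assume "k \<in> ?K"
      then show "\<psi> k \<in> {1, -1}"
        using \<phi>_cases [of k] \<phi>_cases [of "x \<otimes> k \<otimes> inv x"] by (auto simp: \<psi>_def conjugate_inter_def)
    qed
    show "\<forall>a\<in>?K. \<forall>b\<in>?K. \<psi> (a \<otimes> b) = \<psi> a * \<psi> b"
    proof (intro ballI)
      fix a b assume "a \<in> ?K" "b \<in> ?K"
      then have a: "a \<in> H" "x \<otimes> a \<otimes> inv x \<in> H" and b: "b \<in> H" "x \<otimes> b \<otimes> inv x \<in> H"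
        by (auto simp: conjugate_inter_def)
      then have "\<phi> (x \<otimes> (a \<otimes> b) \<otimes> inv x) = \<phi> (x \<otimes> a \<otimes> inv x) * \<phi> (x \<otimes> b \<otimes> inv x)"
        using conjugate_mult [OF x, of a b] \<phi>_mult by simp
      with a b \<phi>_mult show "\<psi> (a \<otimes> b) = \<psi> a * \<psi> b"
        by (simp add: \<psi>_def)
    qed
  qed
  moreover have "{y \<in> ?K. \<psi> y = 1} = {y \<in> ?K. ?good y}"
  proof -
    have "\<psi> y = 1 \<longleftrightarrow> ?good y" if "y \<in> ?K" for y
      using that \<phi>_cases [of y] \<phi>_cases [of "x \<otimes> y \<otimes> inv x"]
      by (auto simp: \<psi>_def conjugate_inter_def)
    then show ?thesis
      by blast
  qed
  moreover have "(\<Sum>y\<in>?K. card (agreeing x y)) = (\<Sum>y\<in>?K. if ?good y then card extensions else 0)"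
    using agreeing_conjugate_in_H [OF x] by (intro sum.cong) (auto simp: conjugate_inter_def)
  then have "(\<Sum>y\<in>?K. card (agreeing x y)) = card extensions * card {y \<in> ?K. ?good y}"
    using finite_H by (simp add: sum.inter_filter [symmetric] conjugate_inter_def)
  ultimately show ?thesis
    using mult_le_mono2 [of "card ?K" "2 * card {y \<in> ?K. ?good y}" "card extensions"] by simp
qed

lemma card_extensions_mult_card_le:
  assumes x: "x \<in> carrier G" "x \<notin> H"
  shows "card extensions * card (carrier G)
    \<le> 2 * (\<Sum>y\<in>carrier G. card (agreeing x y)) + card extensions * card (coset_inter H x)"
proof -
  let ?k = "card extensions" and ?c = "\<lambda>y. card (agreeing x y)"
  define A where "A = conjugate_inter H x"
  define B where "B = coset_inter H x"
  define R where "R = carrier G - A - B"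
  have "A \<inter> B = {}"
  proof (intro equals0I)
    fix y assume "y \<in> A \<inter> B"
    then have "y \<in> H" "x \<otimes> y \<in> H"
      by (auto simp: A_def B_def conjugate_inter_def coset_inter_def)
    then have "x \<otimes> y \<otimes> inv y \<in> H"
      by simp
    then show False
      using x \<open>y \<in> H\<close> by (simp add: m_assoc)
  qed
  moreover have "A \<subseteq> carrier G" "B \<subseteq> carrier G"
    by (auto simp: A_def B_def conjugate_inter_def coset_inter_def)
  ultimately have partition: "carrier G = A \<union> B \<union> R" "A \<inter> B = {}" "(A \<union> B) \<inter> R = {}"
    and finite: "finite A" "finite B" "finite R"
    using finite_carrier finite_subset by (auto simp: R_def)
  have "card (carrier G) = card A + card B + card R"
    using partition finite by (simp add: card_Un_disjoint)
  moreover have "sum ?c (carrier G) = sum ?c A + sum ?c B + sum ?c R"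
    using partition finite by (simp add: sum.union_disjoint)
  moreover have "?k * card A \<le> 2 * sum ?c A"
    unfolding A_def by (rule card_conjugate_inter_le_sum_agreeing [OF x(1)])
  moreover have "2 * sum ?c R = ?k * card R"
  proof -
    have "2 * sum ?c R = (\<Sum>y\<in>R. 2 * ?c y)"
      by (simp add: sum_distrib_left)
    also have "\<dots> = (\<Sum>y\<in>R. ?k)"
      by (intro sum.cong refl card_agreeing_generic [OF x])
        (auto simp: R_def A_def B_def conjugate_inter_def coset_inter_def)
    finally show ?thesis
      by simp
  qed
  ultimately show ?thesis
    unfolding B_def by (simp add: algebra_simps)
qed

lemma sum_card_agreeing_lower_bound:
  "card extensions * (card (carrier G) * (card (carrier G) + card H))
    \<le> 2 * (\<Sum>x\<in>carrier G. \<Sum>y\<in>carrier G. card (agreeing x y))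
      + card extensions * (\<Sum>x\<in>carrier G - H. card (coset_inter H x))"
proof -
  let ?k = "card extensions" and ?n = "card (carrier G)" and ?m = "card H"
    and ?S = "\<lambda>x. \<Sum>y\<in>carrier G. card (agreeing x y)"
    and ?B = "\<Sum>x\<in>carrier G - H. card (coset_inter H x)"
  have "(\<Sum>x\<in>carrier G - H. ?k * ?n) \<le> (\<Sum>x\<in>carrier G - H. 2 * ?S x + ?k * card (coset_inter H x))"
    using card_extensions_mult_card_le by (intro sum_mono) simp
  then have outside: "card (carrier G - H) * (?k * ?n) \<le> 2 * sum ?S (carrier G - H) + ?k * ?B"
    by (simp add: sum.distrib sum_distrib_left)
  have "?n = card (carrier G - H) + ?m"
    using finite_H H.subset finite_carrier by (metis card_Diff_subset card_mono le_add_diff_inverse2)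
  then have "?k * (?n * (?n + ?m)) = card (carrier G - H) * (?k * ?n) + 2 * (?m * (?n * ?k))"
    by (simp add: algebra_simps)
  also have "\<dots> \<le> 2 * sum ?S (carrier G - H) + ?k * ?B + 2 * sum ?S H"
    using outside agreeing_left_in_H by simp
  also have "\<dots> = 2 * sum ?S (carrier G) + ?k * ?B"
    using sum.subset_diff [OF H.subset finite_carrier, of ?S] by simp
  finally show ?thesis .
qed

lemma sum_card_agreeing_eq_sum_card_agreements:
  "(\<Sum>x\<in>carrier G. \<Sum>y\<in>carrier G. card (agreeing x y)) = (\<Sum>f\<in>extensions. card (agreements f))"
proof -
  let ?ind = "\<lambda>f x y. if f x * f y = f (x \<otimes> y) then 1 else 0 :: nat"
  have card_agreements: "card (agreements f) = (\<Sum>x\<in>carrier G. \<Sum>y\<in>carrier G. ?ind f x y)" for f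
  proof -
    have "agreements f = {p \<in> carrier G \<times> carrier G. f (fst p) * f (snd p) = f (fst p \<otimes> snd p)}"
      by (auto simp: agreements_def)
    then show ?thesis
      using finite_carrier by (simp add: card_filter_eq_sum sum.cartesian_product case_prod_beta)
  qed
  have card_agreeing: "card (agreeing x y) = (\<Sum>f\<in>extensions. ?ind f x y)" for x y
    unfolding agreeing_def using finite_extensions by (rule card_filter_eq_sum)
  have "(\<Sum>x\<in>carrier G. \<Sum>y\<in>carrier G. card (agreeing x y))
      = (\<Sum>x\<in>carrier G. \<Sum>y\<in>carrier G. \<Sum>f\<in>extensions. ?ind f x y)"
    by (simp only: card_agreeing)
  also have "\<dots> = (\<Sum>x\<in>carrier G. \<Sum>f\<in>extensions. \<Sum>y\<in>carrier G. ?ind f x y)"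
    by (intro sum.cong refl sum.swap)
  also have "\<dots> = (\<Sum>f\<in>extensions. \<Sum>x\<in>carrier G. \<Sum>y\<in>carrier G. ?ind f x y)"
    by (rule sum.swap)
  also have "\<dots> = (\<Sum>f\<in>extensions. card (agreements f))"
    by (simp only: card_agreements)
  finally show ?thesis .
qed

lemma exists_extension_with_many_agreements:
  "\<exists>f\<in>extensions. 2 * card (carrier G) ^ 2 + card H * card (carrier G) + 2 * card H ^ 2
    \<le> 4 * card (agreements f) + card H * card (normalizer G H)"
proof -
  let ?k = "card extensions" and ?n = "card (carrier G)" and ?m = "card H"
    and ?N = "card (normalizer G H)"
    and ?S = "\<Sum>x\<in>carrier G. \<Sum>y\<in>carrier G. card (agreeing x y)"
    and ?B = "\<Sum>x\<in>carrier G - H. card (coset_inter H x)"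
  obtain f where f: "f \<in> extensions" and "(\<Sum>f\<in>extensions. card (agreements f)) \<le> ?k * card (agreements f)"
    using exists_ge_average [OF finite_extensions extensions_nonempty] by blast
  then have S: "?S \<le> ?k * card (agreements f)"
    by (simp add: sum_card_agreeing_eq_sum_card_agreements)
  have "2 * (?k * (?n * (?n + ?m))) \<le> 4 * ?S + 2 * (?k * ?B)"
    using sum_card_agreeing_lower_bound by simp
  moreover have "?k * (2 * ?B + 2 * ?m ^ 2) \<le> ?k * (?m * (?N + ?n))"
    using sum_card_coset_inter_le [OF H.subgroup_axioms finite_carrier] by (rule mult_le_mono2)
  ultimately have "?k * (2 * ?n ^ 2 + ?m * ?n + 2 * ?m ^ 2) \<le> ?k * (4 * card (agreements f) + ?m * ?N)"
    using S by (simp add: algebra_simps power2_eq_square)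
  then have "2 * ?n ^ 2 + ?m * ?n + 2 * ?m ^ 2 \<le> 4 * card (agreements f) + ?m * ?N"
    using finite_extensions extensions_nonempty by (simp add: card_gt_0_iff)
  with f show ?thesis
    by blast
qed

end

theorem theorem3:
  fixes G (structure) and H :: "'a set" and \<phi> :: "'a \<Rightarrow> int"
  assumes "group G" and "finite (carrier G)" and "subgroup H G"
    and "\<forall>h\<in>H. \<phi> h \<in> {1, -1}"
    and "\<forall>h1\<in>H. \<forall>h2\<in>H. \<phi> (h1 \<otimes> h2) = \<phi> h1 * \<phi> h2"
    and "\<exists>h\<in>H. \<phi> h \<noteq> 1"
  shows "\<exists>f :: 'a \<Rightarrow> int. (\<forall>x\<in>carrier G. f x \<in> {1, -1})
      \<and> (\<Sum>x\<in>carrier G. f x) = 0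
      \<and> real (card {(x, y). x \<in> carrier G \<and> y \<in> carrier G \<and> f x * f y = f (x \<otimes> y)})
          / real (card (carrier G)) ^ 2
        \<ge> (1 / 2) * (1 + (1 / 2) * (real (card H) / real (card (carrier G)))
              * (1 - real (card (normalizer G H)) / real (card (carrier G)))
            + real (card H) ^ 2 / real (card (carrier G)) ^ 2)"
proof -
  interpret sign_character G H \<phi>
    using assms by (intro sign_character.intro sign_character_axioms.intro) simp_all
  obtain f where f: "f \<in> extensions" and count:
      "2 * card (carrier G) ^ 2 + card H * card (carrier G) + 2 * card H ^ 2
        \<le> 4 * card (agreements f) + card H * card (normalizer G H)"
    using exists_extension_with_many_agreements by blast
  obtain h0 where h0: "h0 \<in> H" "\<phi> h0 \<noteq> 1"
    using assms(6) by blast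
  have "0 < card (carrier G)"
    using finite_carrier by (auto simp: card_gt_0_iff)
  from agreement_density_ge [OF this count] show ?thesis
    using extension_sign [OF f] sum_extension_eq_0 [OF f h0] unfolding agreements_def by blast
qed

end
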